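(* Let $D$ be a division algebra and let $\sigma_1,\ldots,\sigma_n$ be pairwise commuting automorphisms of $D$. If the tuple $(\sigma_1,\ldots,\sigma_r)$ is not automorphically normalizable over $D$ for some integer $r\le n$, then the tuple $(\sigma_1,\ldots,\sigma_n)$ is not automorphically normalizable over $D$.
   Context: All rings are associative with unity. For commuting automorphisms $\tau_1,\ldots,\tau_k$ of $D$, $D[t_1,\ldots,t_k;\tau_1,\ldots,\tau_k]$ is the skew polynomial ring in pairwise commuting variables with $t_ia=\tau_i(a)t_i$ for $a\in D$. For a ring $S\supseteq D$, $a\in S$ is automorphic over $D$ with respect to $\tau$ if $ab=\tau(b)a$ for all $b\in D$. Commuting $a_1,\ldots,a_m\in S$ are (left) algebraically independent over $D$ if monomials in them are left linearly independent over $D$. $S$ is automorphically normalizable over $D$ if there exist $m\ge0$ and commuting $a_1,\ldots,a_m\in S$, automorphic over $D$ with respect to pairwise commuting automorphisms, left algebraically independent over $D$, such that $S$ is finitely generated as a left module over the subring $D[a_1,\ldots,a_m]$ generated by $D\cup\{a_1,\ldots,a_m\}$. A tuple $(\tau_1,\ldots,\tau_k)$ of commuting automorphisms is automorphically normalizable over $D$ if every quotient of $D[t_1,\ldots,t_k;\tau_1,\ldots,\tau_k]$ by a proper two-sided ideal is automorphically normalizable over $D$. *)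

theory Defs
  imports "HOL-Algebra.QuotRing" "HOL-Algebra.Generated_Rings"
begin

definition ring_aut :: "('a::division_ring \<Rightarrow> 'a) \<Rightarrow> bool" where
  "ring_aut f \<longleftrightarrow> bij f \<and> (\<forall>x y. f (x + y) = f x + f y) \<and> (\<forall>x y. f (x * y) = f x * f y) \<and> f 1 = 1"

fun taupow :: "(nat \<Rightarrow> 'a \<Rightarrow> 'a) \<Rightarrow> nat \<Rightarrow> (nat \<Rightarrow> nat) \<Rightarrow> 'a \<Rightarrow> 'a" where
  "taupow \<tau> 0 \<alpha> = id"
| "taupow \<tau> (Suc k) \<alpha> = taupow \<tau> k \<alpha> \<circ> (\<tau> k ^^ \<alpha> k)"

text \<open>Skew polynomial ring D[t_0,...,t_(k-1); tau_0,...,tau_(k-1)]: a polynomial is a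
  finitely supported coefficient function on exponent vectors alpha (with alpha i = 0 for i \<ge> k);
  p is the sum of p(alpha) t^alpha, and (a t^alpha)(b t^beta) = a tau^alpha(b) t^(alpha+beta).\<close>
definition skew_carrier :: "nat \<Rightarrow> ((nat \<Rightarrow> nat) \<Rightarrow> 'a::division_ring) set" where
  "skew_carrier k = {p. finite {\<alpha>. p \<alpha> \<noteq> 0} \<and> (\<forall>\<alpha>. p \<alpha> \<noteq> 0 \<longrightarrow> (\<forall>i\<ge>k. \<alpha> i = 0))}"

definition skew_const :: "'a::division_ring \<Rightarrow> (nat \<Rightarrow> nat) \<Rightarrow> 'a" where
  "skew_const d = (\<lambda>\<alpha>. if \<alpha> = (\<lambda>_. 0) then d else 0)"

definition skew_mult :: "(nat \<Rightarrow> 'a::division_ring \<Rightarrow> 'a) \<Rightarrow> nat \<Rightarrow> ((nat \<Rightarrow> nat) \<Rightarrow> 'a) \<Rightarrow> ((nat \<Rightarrow> nat) \<Rightarrow> 'a) \<Rightarrow> (nat \<Rightarrow> nat) \<Rightarrow> 'a" where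
  "skew_mult \<tau> k p q \<gamma> = (\<Sum>\<alpha>\<in>{\<alpha>. \<forall>i. \<alpha> i \<le> \<gamma> i}. p \<alpha> * taupow \<tau> k \<alpha> (q (\<lambda>i. \<gamma> i - \<alpha> i)))"

definition skew_poly_ring :: "(nat \<Rightarrow> 'a::division_ring \<Rightarrow> 'a) \<Rightarrow> nat \<Rightarrow> ((nat \<Rightarrow> nat) \<Rightarrow> 'a) ring" where
  "skew_poly_ring \<tau> k =
    \<lparr> carrier = skew_carrier k,
      mult = skew_mult \<tau> k,
      one = skew_const 1,
      zero = (\<lambda>_. 0),
      add = (\<lambda>p q \<alpha>. p \<alpha> + q \<alpha>) \<rparr>"

fun monom_in :: "('b, 'c) ring_scheme \<Rightarrow> (nat \<Rightarrow> 'b) \<Rightarrow> nat \<Rightarrow> (nat \<Rightarrow> nat) \<Rightarrow> 'b" where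
  "monom_in S a 0 \<alpha> = \<one>\<^bsub>S\<^esub>"
| "monom_in S a (Suc m) \<alpha> = monom_in S a m \<alpha> \<otimes>\<^bsub>S\<^esub> (a m [^]\<^bsub>S\<^esub> \<alpha> m)"

definition aut_normalizable :: "('b, 'c) ring_scheme \<Rightarrow> ('a::division_ring \<Rightarrow> 'b) \<Rightarrow> bool" where
  "aut_normalizable S \<iota> \<longleftrightarrow>
    (\<exists>(m::nat) (a :: nat \<Rightarrow> 'b) (\<sigma> :: nat \<Rightarrow> 'a \<Rightarrow> 'a).
       (\<forall>i<m. a i \<in> carrier S)
     \<and> (\<forall>i<m. \<forall>j<m. a i \<otimes>\<^bsub>S\<^esub> a j = a j \<otimes>\<^bsub>S\<^esub> a i)
     \<and> (\<forall>i<m. ring_aut (\<sigma> i))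
     \<and> (\<forall>i<m. \<forall>j<m. \<sigma> i \<circ> \<sigma> j = \<sigma> j \<circ> \<sigma> i)
     \<and> (\<forall>i<m. \<forall>b. a i \<otimes>\<^bsub>S\<^esub> \<iota> b = \<iota> (\<sigma> i b) \<otimes>\<^bsub>S\<^esub> a i)
     \<and> (\<forall>c :: (nat \<Rightarrow> nat) \<Rightarrow> 'a.
           finite {\<alpha>. c \<alpha> \<noteq> 0} \<longrightarrow> (\<forall>\<alpha>. c \<alpha> \<noteq> 0 \<longrightarrow> (\<forall>i\<ge>m. \<alpha> i = 0)) \<longrightarrow>
           finsum S (\<lambda>\<alpha>. \<iota> (c \<alpha>) \<otimes>\<^bsub>S\<^esub> monom_in S a m \<alpha>) {\<alpha>. c \<alpha> \<noteq> 0} = \<zero>\<^bsub>S\<^esub> \<longrightarrow>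
           (\<forall>\<alpha>. c \<alpha> = 0))
     \<and> (\<exists>G. finite G \<and> G \<subseteq> carrier S \<and>
           (\<forall>s\<in>carrier S. \<exists>r. (\<forall>g\<in>G. r g \<in> generate_ring S (range \<iota> \<union> a ` {..<m}))
                               \<and> s = finsum S (\<lambda>g. r g \<otimes>\<^bsub>S\<^esub> g) G)))"

definition tuple_aut_normalizable :: "(nat \<Rightarrow> 'a::division_ring \<Rightarrow> 'a) \<Rightarrow> nat \<Rightarrow> bool" where
  "tuple_aut_normalizable \<tau> k \<longleftrightarrow>
    (\<forall>I. ideal I (skew_poly_ring \<tau> k) \<longrightarrow> I \<noteq> carrier (skew_poly_ring \<tau> k) \<longrightarrow>
       aut_normalizable (skew_poly_ring \<tau> k Quot I)
         (\<lambda>d. a_r_coset (skew_poly_ring \<tau> k) I (skew_const d)))"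

end

theory Submission
  imports Defs "HOL-Algebra.UnivPoly"
begin

text \<open>Write \<open>R\<^sub>k\<close> for the skew polynomial ring in \<open>t\<^sub>0, ..., t\<^sub>k\<^sub>-\<^sub>1\<close>. Setting the variables
  \<open>t\<^sub>i\<close> with \<open>r \<le> i\<close> to zero is a ring epimorphism \<open>R\<^sub>n \<rightarrow> R\<^sub>r\<close> fixing \<open>D\<close>. If \<open>I\<close> is a proper ideal
  of \<open>R\<^sub>r\<close> for which \<open>R\<^sub>r/I\<close> is not automorphically normalizable, composing with the projection
  gives an epimorphism \<open>R\<^sub>n \<rightarrow> R\<^sub>r/I\<close> whose kernel \<open>K\<close> is proper, and \<open>R\<^sub>n/K \<cong> R\<^sub>r/I\<close> by an
  isomorphism compatible with the embeddings of \<open>D\<close>. Automorphic normalizability is transported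
  along such isomorphisms, so \<open>R\<^sub>n/K\<close> is not automorphically normalizable either.\<close>

section \<open>Words in ring automorphisms\<close>

lemma ring_aut_id: "ring_aut id"
  by (simp add: ring_aut_def)

lemma ring_aut_comp: "ring_aut f \<Longrightarrow> ring_aut g \<Longrightarrow> ring_aut (f \<circ> g)"
  by (simp add: ring_aut_def bij_comp)

lemma ring_aut_funpow: "ring_aut f \<Longrightarrow> ring_aut (f ^^ n)"
  by (induction n) (simp_all add: ring_aut_id ring_aut_comp)

lemma ring_aut_add: "ring_aut f \<Longrightarrow> f (x + y) = f x + f y"
  by (simp add: ring_aut_def)

lemma ring_aut_mult: "ring_aut f \<Longrightarrow> f (x * y) = f x * f y"
  by (simp add: ring_aut_def)

lemma ring_aut_one: "ring_aut f \<Longrightarrow> f 1 = 1"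
  by (simp add: ring_aut_def)

lemma ring_aut_zero: "ring_aut f \<Longrightarrow> f 0 = 0"
  using ring_aut_add[of f 0 0] by simp

lemma ring_aut_sum: "ring_aut f \<Longrightarrow> f (sum g A) = (\<Sum>x\<in>A. f (g x))"
  by (induction A rule: infinite_finite_induct) (simp_all add: ring_aut_zero ring_aut_add)

lemma ring_aut_taupow: "\<forall>i<k. ring_aut (\<tau> i) \<Longrightarrow> ring_aut (taupow \<tau> k \<alpha>)"
  by (induction k) (simp_all add: ring_aut_id ring_aut_comp ring_aut_funpow)

lemma taupow_zero_exponent: "taupow \<tau> k (\<lambda>_. 0) = id"
  by (induction k) simp_all

lemma taupow_truncate: "r \<le> n \<Longrightarrow> \<forall>i\<ge>r. \<alpha> i = 0 \<Longrightarrow> taupow \<tau> n \<alpha> = taupow \<tau> r \<alpha>"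
  by (induction n) (auto simp: le_Suc_eq)

lemma funpow_commute: "\<forall>x. f (g x) = g (f x) \<Longrightarrow> (f ^^ n) (g x) = g ((f ^^ n) x)"
  by (induction n) simp_all

lemma taupow_commute:
  "\<forall>i<k. \<forall>x. \<tau> i (g x) = g (\<tau> i x) \<Longrightarrow> taupow \<tau> k \<alpha> (g x) = g (taupow \<tau> k \<alpha> x)"
  by (induction k arbitrary: x) (simp_all add: funpow_commute)

lemma taupow_add:
  assumes "\<forall>i<k. \<forall>j<k. \<tau> i \<circ> \<tau> j = \<tau> j \<circ> \<tau> i"
  shows "taupow \<tau> k (\<lambda>i. \<alpha> i + \<beta> i) x = taupow \<tau> k \<alpha> (taupow \<tau> k \<beta> x)"
  using assms
proof (induction k arbitrary: x)
  case 0
  then show ?case by simp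
next
  case (Suc k)
  have "\<forall>i<k. \<forall>y. \<tau> i (\<tau> k y) = \<tau> k (\<tau> i y)"
    using Suc.prems by (metis comp_apply less_SucI lessI)
  then have "\<forall>i<k. \<forall>y. \<tau> i ((\<tau> k ^^ \<alpha> k) y) = (\<tau> k ^^ \<alpha> k) (\<tau> i y)"
    by (simp add: funpow_commute)
  then have swap: "taupow \<tau> k \<beta> ((\<tau> k ^^ \<alpha> k) y) = (\<tau> k ^^ \<alpha> k) (taupow \<tau> k \<beta> y)" for y
    by (rule taupow_commute)
  have IH: "taupow \<tau> k (\<lambda>i. \<alpha> i + \<beta> i) y = taupow \<tau> k \<alpha> (taupow \<tau> k \<beta> y)" for y
    using Suc.prems by (intro Suc.IH) auto
  show ?case
    by (simp add: IH funpow_add swap)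
qed

section \<open>The skew polynomial ring and truncation\<close>

lemma carrier_skew_poly_ring [simp]: "carrier (skew_poly_ring \<tau> k) = skew_carrier k"
  by (simp add: skew_poly_ring_def)

lemma skew_const_in_carrier: "skew_const d \<in> skew_carrier k"
  by (simp add: skew_carrier_def skew_const_def)

lemma skew_zero_in_carrier: "(\<lambda>_. 0) \<in> skew_carrier k"
  by (simp add: skew_carrier_def)

lemma skew_carrier_mono: "r \<le> n \<Longrightarrow> skew_carrier r \<subseteq> skew_carrier n"
  by (auto simp: skew_carrier_def)

lemma skew_add_closed:
  assumes "p \<in> skew_carrier k" "q \<in> skew_carrier k"
  shows "(\<lambda>\<alpha>. p \<alpha> + q \<alpha>) \<in> skew_carrier k"
proof -
  have "{\<alpha>. p \<alpha> + q \<alpha> \<noteq> 0} \<subseteq> {\<alpha>. p \<alpha> \<noteq> 0} \<union> {\<alpha>. q \<alpha> \<noteq> 0}"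
    by auto
  then have "finite {\<alpha>. p \<alpha> + q \<alpha> \<noteq> 0}"
    by (rule finite_subset) (use assms in \<open>simp add: skew_carrier_def\<close>)
  then show ?thesis
    using assms by (auto simp: skew_carrier_def) (metis add.right_neutral)
qed

lemma skew_uminus_closed: "p \<in> skew_carrier k \<Longrightarrow> (\<lambda>\<alpha>. - p \<alpha>) \<in> skew_carrier k"
  by (simp add: skew_carrier_def)

lemma skew_mult_neq_zeroE:
  assumes "\<forall>i<k. ring_aut (\<tau> i)" and "skew_mult \<tau> k p q \<gamma> \<noteq> 0"
  obtains \<alpha> \<beta> where "p \<alpha> \<noteq> 0" and "q \<beta> \<noteq> 0" and "\<gamma> = (\<lambda>i. \<alpha> i + \<beta> i)"
proof -
  obtain \<alpha> where "\<alpha> \<in> {\<alpha>. \<forall>i. \<alpha> i \<le> \<gamma> i}"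
    and nz: "p \<alpha> * taupow \<tau> k \<alpha> (q (\<lambda>i. \<gamma> i - \<alpha> i)) \<noteq> 0"
    using assms(2) unfolding skew_mult_def by (rule sum.not_neutral_contains_not_neutral)
  then have "\<gamma> = (\<lambda>i. \<alpha> i + (\<gamma> i - \<alpha> i))"
    by auto
  moreover have "p \<alpha> \<noteq> 0" and "q (\<lambda>i. \<gamma> i - \<alpha> i) \<noteq> 0"
    using nz ring_aut_zero[OF ring_aut_taupow[OF assms(1)]] by auto
  ultimately show ?thesis
    using that by blast
qed

lemma skew_mult_closed:
  assumes aut: "\<forall>i<k. ring_aut (\<tau> i)" and p: "p \<in> skew_carrier k" and q: "q \<in> skew_carrier k"
  shows "skew_mult \<tau> k p q \<in> skew_carrier k"
proof -
  let ?sums = "(\<lambda>(\<alpha>, \<beta>) i. \<alpha> i + \<beta> i) ` ({\<alpha>. p \<alpha> \<noteq> 0} \<times> {\<beta>. q \<beta> \<noteq> 0})"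
  have supp: "\<gamma> \<in> ?sums \<and> (\<forall>i\<ge>k. \<gamma> i = 0)" if nz: "skew_mult \<tau> k p q \<gamma> \<noteq> 0" for \<gamma>
  proof -
    obtain \<alpha> \<beta> where "p \<alpha> \<noteq> 0" "q \<beta> \<noteq> 0" "\<gamma> = (\<lambda>i. \<alpha> i + \<beta> i)"
      using aut nz by (rule skew_mult_neq_zeroE)
    moreover from this have "\<gamma> \<in> ?sums"
      by (intro image_eqI[of _ _ "(\<alpha>, \<beta>)"]) simp_all
    ultimately show ?thesis
      using p q by (simp add: skew_carrier_def)
  qed
  then have "{\<gamma>. skew_mult \<tau> k p q \<gamma> \<noteq> 0} \<subseteq> ?sums"
    by blast
  then have "finite {\<gamma>. skew_mult \<tau> k p q \<gamma> \<noteq> 0}"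
    by (rule finite_subset) (use p q in \<open>simp add: skew_carrier_def\<close>)
  with supp show ?thesis
    by (simp add: skew_carrier_def)
qed

lemma finite_pointwise_below:
  assumes "\<forall>i\<ge>k. (\<gamma> :: nat \<Rightarrow> nat) i = 0"
  shows "finite {\<alpha>. \<forall>i. \<alpha> i \<le> \<gamma> i}"
proof (rule finite_subset)
  let ?B = "\<Union>j<k. {..\<gamma> j}"
  show "finite {\<alpha>. \<forall>i. (i \<in> {..<k} \<longrightarrow> \<alpha> i \<in> ?B) \<and> (i \<notin> {..<k} \<longrightarrow> \<alpha> i = 0)}"
    by (intro finite_set_of_finite_funs) auto
  show "{\<alpha>. \<forall>i. \<alpha> i \<le> \<gamma> i} \<subseteq> {\<alpha>. \<forall>i. (i \<in> {..<k} \<longrightarrow> \<alpha> i \<in> ?B) \<and> (i \<notin> {..<k} \<longrightarrow> \<alpha> i = 0)}"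
    using assms by (auto simp: not_less) (metis le_zero_eq)
qed

lemma skew_carrier_finite_below:
  "p \<in> skew_carrier k \<Longrightarrow> p \<gamma> \<noteq> 0 \<Longrightarrow> finite {\<alpha>. \<forall>i. \<alpha> i \<le> \<gamma> i}"
  using finite_pointwise_below[of k \<gamma>] by (simp add: skew_carrier_def)

lemma skew_one_mult:
  assumes "q \<in> skew_carrier k"
  shows "skew_mult \<tau> k (skew_const 1) q = q"
proof
  fix \<gamma>
  have "skew_mult \<tau> k (skew_const 1) q \<gamma> = (\<Sum>\<alpha>\<in>{\<alpha>. \<forall>i. \<alpha> i \<le> \<gamma> i}. if \<alpha> = (\<lambda>_. 0) then q \<gamma> else 0)"
    unfolding skew_mult_def by (intro sum.cong) (auto simp: skew_const_def taupow_zero_exponent)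
  also have "\<dots> = q \<gamma>"
    using skew_carrier_finite_below[OF assms] by (cases "finite {\<alpha>. \<forall>i. \<alpha> i \<le> \<gamma> i}") auto
  finally show "skew_mult \<tau> k (skew_const 1) q \<gamma> = q \<gamma>" .
qed

lemma skew_mult_one:
  assumes "\<forall>i<k. ring_aut (\<tau> i)" and "p \<in> skew_carrier k"
  shows "skew_mult \<tau> k p (skew_const 1) = p"
proof
  fix \<gamma>
  have "\<forall>i. \<alpha> i \<le> \<gamma> i \<Longrightarrow> (\<lambda>i. \<gamma> i - \<alpha> i) = (\<lambda>_. 0) \<longleftrightarrow> \<alpha> = \<gamma>" for \<alpha> :: "nat \<Rightarrow> nat"
    by (auto simp: fun_eq_iff) (metis antisym)
  then have "skew_mult \<tau> k p (skew_const 1) \<gamma> = (\<Sum>\<alpha>\<in>{\<alpha>. \<forall>i. \<alpha> i \<le> \<gamma> i}. if \<alpha> = \<gamma> then p \<gamma> else 0)"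
    unfolding skew_mult_def using ring_aut_taupow[OF assms(1)]
    by (intro sum.cong) (auto simp: skew_const_def ring_aut_one ring_aut_zero)
  also have "\<dots> = p \<gamma>"
    using skew_carrier_finite_below[OF assms(2)] by (cases "finite {\<alpha>. \<forall>i. \<alpha> i \<le> \<gamma> i}") auto
  finally show "skew_mult \<tau> k p (skew_const 1) \<gamma> = p \<gamma>" .
qed

lemma skew_mult_add_left:
  "skew_mult \<tau> k (\<lambda>\<alpha>. p \<alpha> + q \<alpha>) r = (\<lambda>\<gamma>. skew_mult \<tau> k p r \<gamma> + skew_mult \<tau> k q r \<gamma>)"
  by (rule ext) (simp add: skew_mult_def distrib_right sum.distrib)

lemma skew_mult_add_right:
  assumes "\<forall>i<k. ring_aut (\<tau> i)"
  shows "skew_mult \<tau> k r (\<lambda>\<alpha>. p \<alpha> + q \<alpha>) = (\<lambda>\<gamma>. skew_mult \<tau> k r p \<gamma> + skew_mult \<tau> k r q \<gamma>)"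
  using ring_aut_taupow[OF assms]
  by (intro ext) (simp add: skew_mult_def distrib_left sum.distrib ring_aut_add)

lemma bij_betw_pointwise_add:
  fixes \<delta> :: "nat \<Rightarrow> nat"
  shows "bij_betw (\<lambda>(\<alpha>, \<beta>). (\<lambda>i. \<alpha> i + \<beta> i, \<alpha>))
           (SIGMA \<alpha>:{\<alpha>. \<forall>i. \<alpha> i \<le> \<delta> i}. {\<beta>. \<forall>i. \<beta> i \<le> \<delta> i - \<alpha> i})
           (SIGMA \<gamma>:{\<gamma>. \<forall>i. \<gamma> i \<le> \<delta> i}. {\<alpha>. \<forall>i. \<alpha> i \<le> \<gamma> i})"
proof (rule bij_betw_byWitness[where f' = "\<lambda>(\<gamma>, \<alpha>). (\<alpha>, \<lambda>i. \<gamma> i - \<alpha> i)"])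
  show "(\<lambda>(\<alpha>, \<beta>). (\<lambda>i. \<alpha> i + \<beta> i, \<alpha>)) ` (SIGMA \<alpha>:{\<alpha>. \<forall>i. \<alpha> i \<le> \<delta> i}. {\<beta>. \<forall>i. \<beta> i \<le> \<delta> i - \<alpha> i})
      \<subseteq> (SIGMA \<gamma>:{\<gamma>. \<forall>i. \<gamma> i \<le> \<delta> i}. {\<alpha>. \<forall>i. \<alpha> i \<le> \<gamma> i})"
    by (auto simp: le_diff_conv2 add.commute)
  show "(\<lambda>(\<gamma>, \<alpha>). (\<alpha>, \<lambda>i. \<gamma> i - \<alpha> i)) ` (SIGMA \<gamma>:{\<gamma>. \<forall>i. \<gamma> i \<le> \<delta> i}. {\<alpha>. \<forall>i. \<alpha> i \<le> \<gamma> i})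
      \<subseteq> (SIGMA \<alpha>:{\<alpha>. \<forall>i. \<alpha> i \<le> \<delta> i}. {\<beta>. \<forall>i. \<beta> i \<le> \<delta> i - \<alpha> i})"
    by (auto simp: diff_le_mono) (meson order.trans)
qed (auto simp: fun_eq_iff)

lemma skew_mult_assoc:
  assumes aut: "\<forall>i<k. ring_aut (\<tau> i)" and comm: "\<forall>i<k. \<forall>j<k. \<tau> i \<circ> \<tau> j = \<tau> j \<circ> \<tau> i"
  shows "skew_mult \<tau> k (skew_mult \<tau> k p q) r = skew_mult \<tau> k p (skew_mult \<tau> k q r)"
proof
  fix \<delta> :: "nat \<Rightarrow> nat"
  define below where "below = (\<lambda>\<gamma>. {\<alpha>::nat \<Rightarrow> nat. \<forall>i. \<alpha> i \<le> \<gamma> i})"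
  define T where "T = taupow \<tau> k"
  define f where "f = (\<lambda>(\<gamma>, \<alpha>). p \<alpha> * T \<alpha> (q (\<lambda>i. \<gamma> i - \<alpha> i)) * T \<gamma> (r (\<lambda>i. \<delta> i - \<gamma> i)))"
  have mult: "skew_mult \<tau> k p' q' \<gamma> = (\<Sum>\<alpha>\<in>below \<gamma>. p' \<alpha> * T \<alpha> (q' (\<lambda>i. \<gamma> i - \<alpha> i)))" for p' q' \<gamma>
    by (simp add: skew_mult_def below_def T_def)
  show "skew_mult \<tau> k (skew_mult \<tau> k p q) r \<delta> = skew_mult \<tau> k p (skew_mult \<tau> k q r) \<delta>"
  proof (cases "finite (below \<delta>)")
    case False
    \<comment> \<open>\<open>\<delta>\<close> has infinite support; both sides are sums over the infinite set \<open>below \<delta>\<close>, hence \<open>0\<close>\<close>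
    then show ?thesis
      by (simp add: mult)
  next
    case True
    have finite_below: "finite {\<alpha>. \<forall>i. \<alpha> i \<le> \<gamma> i}" if "\<forall>i. \<gamma> i \<le> \<delta> i" for \<gamma>
      using that by (intro finite_subset[OF _ True]) (auto simp: below_def intro: order.trans)
    have "skew_mult \<tau> k (skew_mult \<tau> k p q) r \<delta> = (\<Sum>\<gamma>\<in>below \<delta>. \<Sum>\<alpha>\<in>below \<gamma>. f (\<gamma>, \<alpha>))"
      by (simp add: mult f_def sum_distrib_right)
    also have "\<dots> = (\<Sum>(\<gamma>, \<alpha>)\<in>Sigma (below \<delta>) below. f (\<gamma>, \<alpha>))"
      using True finite_below by (intro sum.Sigma) (simp_all add: below_def)
    \<comment> \<open>substitute \<open>\<gamma> = \<alpha> + \<beta>\<close>\<close>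
    also have "\<dots> = (\<Sum>(\<alpha>, \<beta>)\<in>Sigma (below \<delta>) (\<lambda>\<alpha>. below (\<lambda>i. \<delta> i - \<alpha> i)). f (\<lambda>i. \<alpha> i + \<beta> i, \<alpha>))"
      using sum.reindex_bij_betw[OF bij_betw_pointwise_add[of \<delta>], of f]
      by (simp add: below_def case_prod_unfold)
    also have "\<dots> = (\<Sum>\<alpha>\<in>below \<delta>. \<Sum>\<beta>\<in>below (\<lambda>i. \<delta> i - \<alpha> i). f (\<lambda>i. \<alpha> i + \<beta> i, \<alpha>))"
      using True finite_below by (intro sum.Sigma[symmetric]) (simp_all add: below_def)
    also have "\<dots> = skew_mult \<tau> k p (skew_mult \<tau> k q r) \<delta>"
      using ring_aut_taupow[OF aut] taupow_add[OF comm]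
      by (simp add: mult f_def T_def sum_distrib_left ring_aut_sum ring_aut_mult mult.assoc)
    finally show ?thesis .
  qed
qed

lemma ring_skew_poly_ring:
  assumes aut: "\<forall>i<k. ring_aut (\<tau> i)" and comm: "\<forall>i<k. \<forall>j<k. \<tau> i \<circ> \<tau> j = \<tau> j \<circ> \<tau> i"
  shows "ring (skew_poly_ring \<tau> k)"
proof (rule ringI)
  show "abelian_group (skew_poly_ring \<tau> k)"
  proof (rule abelian_groupI)
    fix p assume "p \<in> carrier (skew_poly_ring \<tau> k)"
    then show "\<exists>q\<in>carrier (skew_poly_ring \<tau> k). q \<oplus>\<^bsub>skew_poly_ring \<tau> k\<^esub> p = \<zero>\<^bsub>skew_poly_ring \<tau> k\<^esub>"
      by (intro bexI[of _ "\<lambda>\<alpha>. - p \<alpha>"]) (simp_all add: skew_poly_ring_def skew_uminus_closed)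
  qed (auto simp: skew_poly_ring_def skew_add_closed add.assoc add.commute skew_zero_in_carrier)
  show "monoid (skew_poly_ring \<tau> k)"
    by (rule monoidI)
      (simp_all add: skew_poly_ring_def skew_mult_closed[OF aut] skew_const_in_carrier
        skew_mult_assoc[OF aut comm] skew_one_mult skew_mult_one[OF aut])
qed (simp_all add: skew_poly_ring_def skew_mult_add_left skew_mult_add_right[OF aut])

definition skew_truncate :: "nat \<Rightarrow> ((nat \<Rightarrow> nat) \<Rightarrow> 'a::zero) \<Rightarrow> (nat \<Rightarrow> nat) \<Rightarrow> 'a" where
  "skew_truncate r p = (\<lambda>\<alpha>. if \<forall>i\<ge>r. \<alpha> i = 0 then p \<alpha> else 0)"

lemma skew_truncate_id: "p \<in> skew_carrier r \<Longrightarrow> skew_truncate r p = p"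
  by (auto simp: skew_truncate_def skew_carrier_def fun_eq_iff)

lemma skew_truncate_add:
  fixes p q :: "(nat \<Rightarrow> nat) \<Rightarrow> 'a::monoid_add"
  shows "skew_truncate r (\<lambda>\<alpha>. p \<alpha> + q \<alpha>) = (\<lambda>\<alpha>. skew_truncate r p \<alpha> + skew_truncate r q \<alpha>)"
  by (rule ext) (auto simp: skew_truncate_def)

lemma skew_truncate_in_carrier: "p \<in> skew_carrier n \<Longrightarrow> skew_truncate r p \<in> skew_carrier r"
  by (auto simp: skew_truncate_def skew_carrier_def elim: finite_subset[rotated])

lemma skew_truncate_mult:
  assumes aut: "\<forall>i<r. ring_aut (\<sigma> i)" and "r \<le> n"
  shows "skew_truncate r (skew_mult \<sigma> n p q) = skew_mult \<sigma> r (skew_truncate r p) (skew_truncate r q)"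
proof
  fix \<gamma> :: "nat \<Rightarrow> nat"
  show "skew_truncate r (skew_mult \<sigma> n p q) \<gamma> = skew_mult \<sigma> r (skew_truncate r p) (skew_truncate r q) \<gamma>"
  proof (cases "\<forall>i\<ge>r. \<gamma> i = 0")
    case True
    have "p \<alpha> * taupow \<sigma> n \<alpha> (q (\<lambda>i. \<gamma> i - \<alpha> i))
        = skew_truncate r p \<alpha> * taupow \<sigma> r \<alpha> (skew_truncate r q (\<lambda>i. \<gamma> i - \<alpha> i))"
      if "\<forall>i. \<alpha> i \<le> \<gamma> i" for \<alpha>
    proof -
      have \<alpha>: "\<forall>i\<ge>r. \<alpha> i = 0"
        using that True by (metis le_zero_eq)
      then have "taupow \<sigma> n \<alpha> = taupow \<sigma> r \<alpha>"
        by (rule taupow_truncate[OF \<open>r \<le> n\<close>])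
      then show ?thesis
        using \<alpha> True by (simp add: skew_truncate_def)
    qed
    then have "skew_mult \<sigma> n p q \<gamma> = skew_mult \<sigma> r (skew_truncate r p) (skew_truncate r q) \<gamma>"
      unfolding skew_mult_def by (intro sum.cong) auto
    then show ?thesis
      using True by (simp add: skew_truncate_def)
  next
    case False
    then have "\<not> ((\<forall>i\<ge>r. \<alpha> i = 0) \<and> (\<forall>i\<ge>r. \<gamma> i - \<alpha> i = 0))" if "\<forall>i. \<alpha> i \<le> \<gamma> i" for \<alpha> :: "nat \<Rightarrow> nat"
      using that by (metis diff_is_0_eq le_zero_eq)
    then show ?thesis
      using False ring_aut_zero[OF ring_aut_taupow[OF aut]]
      by (auto simp: skew_truncate_def skew_mult_def intro!: sum.neutral)
  qed
qed

lemma skew_truncate_ring_hom: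
  assumes "\<forall>i<r. ring_aut (\<sigma> i)" and "r \<le> n"
  shows "skew_truncate r \<in> ring_hom (skew_poly_ring \<sigma> n) (skew_poly_ring \<sigma> r)"
  using assms
  by (intro ring_hom_memI)
    (simp_all add: skew_poly_ring_def skew_truncate_in_carrier skew_truncate_mult skew_truncate_add
      skew_truncate_id skew_const_in_carrier)

lemma skew_truncate_surj:
  assumes "r \<le> n"
  shows "skew_truncate r ` skew_carrier n = skew_carrier r"
proof
  show "skew_truncate r ` skew_carrier n \<subseteq> skew_carrier r"
    using skew_truncate_in_carrier by blast
  show "skew_carrier r \<subseteq> skew_truncate r ` skew_carrier n"
  proof
    fix p assume "p \<in> skew_carrier r"
    then show "p \<in> skew_truncate r ` skew_carrier n"
      using skew_carrier_mono[OF assms] by (intro image_eqI[of _ _ p]) (auto simp: skew_truncate_id)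
  qed
qed

section \<open>Transport of automorphic normalizability\<close>

definition left_alg_independent ::
    "('b, 'c) ring_scheme \<Rightarrow> ('a::division_ring \<Rightarrow> 'b) \<Rightarrow> (nat \<Rightarrow> 'b) \<Rightarrow> nat \<Rightarrow> bool" where
  "left_alg_independent S \<iota> a m \<longleftrightarrow>
    (\<forall>c :: (nat \<Rightarrow> nat) \<Rightarrow> 'a.
       finite {\<alpha>. c \<alpha> \<noteq> 0} \<longrightarrow> (\<forall>\<alpha>. c \<alpha> \<noteq> 0 \<longrightarrow> (\<forall>i\<ge>m. \<alpha> i = 0)) \<longrightarrow>
       finsum S (\<lambda>\<alpha>. \<iota> (c \<alpha>) \<otimes>\<^bsub>S\<^esub> monom_in S a m \<alpha>) {\<alpha>. c \<alpha> \<noteq> 0} = \<zero>\<^bsub>S\<^esub> \<longrightarrow>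
       (\<forall>\<alpha>. c \<alpha> = 0))"

definition finitely_generated_over :: "('b, 'c) ring_scheme \<Rightarrow> 'b set \<Rightarrow> bool" where
  "finitely_generated_over S A \<longleftrightarrow>
    (\<exists>G. finite G \<and> G \<subseteq> carrier S \<and>
       (\<forall>s\<in>carrier S. \<exists>r. (\<forall>g\<in>G. r g \<in> generate_ring S A) \<and> s = finsum S (\<lambda>g. r g \<otimes>\<^bsub>S\<^esub> g) G))"

lemma aut_normalizable_iff:
  "aut_normalizable S \<iota> \<longleftrightarrow>
    (\<exists>m a \<sigma>. (\<forall>i<m. a i \<in> carrier S) \<and> (\<forall>i<m. \<forall>j<m. a i \<otimes>\<^bsub>S\<^esub> a j = a j \<otimes>\<^bsub>S\<^esub> a i)
      \<and> (\<forall>i<m. ring_aut (\<sigma> i)) \<and> (\<forall>i<m. \<forall>j<m. \<sigma> i \<circ> \<sigma> j = \<sigma> j \<circ> \<sigma> i)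
      \<and> (\<forall>i<m. \<forall>b. a i \<otimes>\<^bsub>S\<^esub> \<iota> b = \<iota> (\<sigma> i b) \<otimes>\<^bsub>S\<^esub> a i)
      \<and> left_alg_independent S \<iota> a m \<and> finitely_generated_over S (range \<iota> \<union> a ` {..<m}))"
  unfolding aut_normalizable_def left_alg_independent_def finitely_generated_over_def ..

lemma (in ring_hom_ring) hom_generate_ring:
  assumes H: "H \<subseteq> carrier R" and "x \<in> generate_ring R H"
  shows "h x \<in> generate_ring S (h ` H)"
  using assms(2)
proof (induction rule: generate_ring.induct)
  case one
  then show ?case by (simp add: generate_ring.one)
next
  case (incl x)
  then show ?case by (simp add: generate_ring.incl)
next
  case (a_inv x)
  then show ?case
    using R.generate_ring_in_carrier[OF H] by (simp add: generate_ring.a_inv)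
next
  case (eng_add x y)
  then show ?case
    using R.generate_ring_in_carrier[OF H] by (simp add: generate_ring.eng_add)
next
  case (eng_mult x y)
  then show ?case
    using R.generate_ring_in_carrier[OF H] by (simp add: generate_ring.eng_mult)
qed

lemma (in ring_hom_ring) hom_monom_in:
  assumes "\<forall>i<m. a i \<in> carrier R"
  shows "monom_in R a m \<alpha> \<in> carrier R \<and> h (monom_in R a m \<alpha>) = monom_in S (h \<circ> a) m \<alpha>"
  using assms by (induction m) (simp_all add: hom_nat_pow)

lemma (in ring_hom_ring) left_alg_independent_image:
  assumes inj: "inj_on h (carrier R)" and \<iota>: "range \<iota> \<subseteq> carrier R" and a: "\<forall>i<m. a i \<in> carrier R"
    and indep: "left_alg_independent R \<iota> a m"
  shows "left_alg_independent S (h \<circ> \<iota>) (h \<circ> a) m"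
  unfolding left_alg_independent_def
proof (intro allI impI)
  fix c \<beta>
  assume fin: "finite {\<alpha>. c \<alpha> \<noteq> 0}" and supp: "\<forall>\<alpha>. c \<alpha> \<noteq> 0 \<longrightarrow> (\<forall>i\<ge>m. \<alpha> i = 0)"
    and zero: "(\<Oplus>\<^bsub>S\<^esub>\<alpha>\<in>{\<alpha>. c \<alpha> \<noteq> 0}. (h \<circ> \<iota>) (c \<alpha>) \<otimes>\<^bsub>S\<^esub> monom_in S (h \<circ> a) m \<alpha>) = \<zero>\<^bsub>S\<^esub>"
  let ?f = "\<lambda>\<alpha>. \<iota> (c \<alpha>) \<otimes> monom_in R a m \<alpha>"
  have \<iota>_carrier: "\<iota> d \<in> carrier R" for d
    using \<iota> by auto
  have f: "?f \<in> {\<alpha>. c \<alpha> \<noteq> 0} \<rightarrow> carrier R"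
    using \<iota>_carrier hom_monom_in[OF a] by auto
  have "h \<circ> ?f = (\<lambda>\<alpha>. (h \<circ> \<iota>) (c \<alpha>) \<otimes>\<^bsub>S\<^esub> monom_in S (h \<circ> a) m \<alpha>)"
    using \<iota>_carrier hom_monom_in[OF a] by (simp add: fun_eq_iff)
  then have "h (finsum R ?f {\<alpha>. c \<alpha> \<noteq> 0}) = h \<zero>"
    using zero by (simp add: hom_finsum[OF f])
  then have "finsum R ?f {\<alpha>. c \<alpha> \<noteq> 0} = \<zero>"
    by (rule inj_onD[OF inj]) (simp_all add: R.finsum_closed[OF f])
  then show "c \<beta> = 0"
    using indep fin supp unfolding left_alg_independent_def by blast
qed

lemma (in ring_hom_ring) finitely_generated_over_image:
  assumes bij: "bij_betw h (carrier R) (carrier S)" and A: "A \<subseteq> carrier R"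
    and gen: "finitely_generated_over R A"
  shows "finitely_generated_over S (h ` A)"
proof -
  obtain G where G: "finite G" "G \<subseteq> carrier R"
    and span: "\<forall>s\<in>carrier R. \<exists>r. (\<forall>g\<in>G. r g \<in> generate_ring R A) \<and> s = (\<Oplus>g\<in>G. r g \<otimes> g)"
    using gen unfolding finitely_generated_over_def by blast
  have inj: "inj_on h G"
    using bij G(2) by (auto simp: bij_betw_def intro: inj_on_subset)
  have "\<exists>r'. (\<forall>g'\<in>h ` G. r' g' \<in> generate_ring S (h ` A)) \<and> s' = (\<Oplus>\<^bsub>S\<^esub>g'\<in>h ` G. r' g' \<otimes>\<^bsub>S\<^esub> g')"
    if "s' \<in> carrier S" for s'
  proof -
    have "s' \<in> h ` carrier R"
      using bij that by (simp add: bij_betw_def)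
    then obtain s where s: "s \<in> carrier R" "s' = h s"
      by blast
    obtain r where r: "\<forall>g\<in>G. r g \<in> generate_ring R A" and s_eq: "s = (\<Oplus>g\<in>G. r g \<otimes> g)"
      using span s(1) by blast
    have r_carrier: "r g \<in> carrier R" if "g \<in> G" for g
      using r that R.generate_ring_in_carrier[OF A] by blast
    define r' where "r' = (\<lambda>g'. h (r (inv_into G h g')))"
    have r'_h: "r' (h g) = h (r g)" if "g \<in> G" for g
      using inj that by (simp add: r'_def)
    have G_carrier: "g \<in> carrier R" if "g \<in> G" for g
      using G(2) that by blast
    have "s' = h (\<Oplus>g\<in>G. r g \<otimes> g)"
      using s s_eq by simp
    also have "\<dots> = (\<Oplus>\<^bsub>S\<^esub>g\<in>G. h (r g \<otimes> g))"
      using r_carrier G_carrier by (simp add: hom_finsum comp_def)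
    also have "\<dots> = (\<Oplus>\<^bsub>S\<^esub>g\<in>G. r' (h g) \<otimes>\<^bsub>S\<^esub> h g)"
      using r_carrier G_carrier r'_h by (intro S.finsum_cong') auto
    also have "\<dots> = (\<Oplus>\<^bsub>S\<^esub>g'\<in>h ` G. r' g' \<otimes>\<^bsub>S\<^esub> g')"
      using inj r_carrier G_carrier r'_h by (intro S.finsum_reindex[symmetric]) auto
    finally show ?thesis
      using r r'_h hom_generate_ring[OF A] by (intro exI[of _ r']) auto
  qed
  then show ?thesis
    unfolding finitely_generated_over_def using G by (intro exI[of _ "h ` G"]) auto
qed

lemma (in ring_hom_ring) aut_normalizable_image:
  assumes bij: "bij_betw h (carrier R) (carrier S)" and \<iota>: "range \<iota> \<subseteq> carrier R"
    and norm: "aut_normalizable R \<iota>"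
  shows "aut_normalizable S (h \<circ> \<iota>)"
proof -
  obtain m a \<sigma> where a: "\<forall>i<m. a i \<in> carrier R"
    and a_comm: "\<forall>i<m. \<forall>j<m. a i \<otimes> a j = a j \<otimes> a i"
    and \<sigma>: "\<forall>i<m. ring_aut (\<sigma> i)" "\<forall>i<m. \<forall>j<m. \<sigma> i \<circ> \<sigma> j = \<sigma> j \<circ> \<sigma> i"
    and a_aut: "\<forall>i<m. \<forall>b. a i \<otimes> \<iota> b = \<iota> (\<sigma> i b) \<otimes> a i"
    and indep: "left_alg_independent R \<iota> a m"
    and gen: "finitely_generated_over R (range \<iota> \<union> a ` {..<m})"
    using norm unfolding aut_normalizable_iff by blast
  have \<iota>_carrier: "\<iota> d \<in> carrier R" for d
    using \<iota> by auto
  have "\<forall>i<m. \<forall>j<m. (h \<circ> a) i \<otimes>\<^bsub>S\<^esub> (h \<circ> a) j = (h \<circ> a) j \<otimes>\<^bsub>S\<^esub> (h \<circ> a) i"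
    using a a_comm by (simp flip: hom_mult)
  moreover have "\<forall>i<m. \<forall>b. (h \<circ> a) i \<otimes>\<^bsub>S\<^esub> (h \<circ> \<iota>) b = (h \<circ> \<iota>) (\<sigma> i b) \<otimes>\<^bsub>S\<^esub> (h \<circ> a) i"
    using a a_aut \<iota>_carrier by (simp flip: hom_mult)
  moreover have "left_alg_independent S (h \<circ> \<iota>) (h \<circ> a) m"
    using bij \<iota> a indep by (intro left_alg_independent_image) (simp_all add: bij_betw_def)
  moreover have "finitely_generated_over S (h ` (range \<iota> \<union> a ` {..<m}))"
    using bij \<iota> a gen by (intro finitely_generated_over_image) auto
  then have "finitely_generated_over S (range (h \<circ> \<iota>) \<union> (h \<circ> a) ` {..<m})"
    by (simp add: image_Un image_comp)
  ultimately show ?thesis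
    unfolding aut_normalizable_iff using a \<sigma> by (intro exI[of _ m] exI[of _ "h \<circ> a"] exI[of _ \<sigma>]) simp
qed

lemma (in ring_hom_ring) aut_normalizable_of_quotient_kernel:
  assumes surj: "h ` carrier R = carrier S" and \<iota>: "range \<iota> \<subseteq> carrier R"
    and norm: "aut_normalizable (R Quot a_kernel R S h) (\<lambda>d. a_kernel R S h +> \<iota> d)"
  shows "aut_normalizable S (h \<circ> \<iota>)"
proof -
  let ?K = "a_kernel R S h"
  let ?\<phi> = "\<lambda>X. the_elem (h ` X)"
  have iso: "?\<phi> \<in> ring_iso (R Quot ?K) S"
    by (rule FactRing_iso_set[OF surj])
  interpret \<phi>: ring_hom_ring "R Quot ?K" S ?\<phi>
    using iso ideal.quotient_is_ring[OF kernel_is_ideal] S.ring_axioms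
    by (intro ring_hom_ringI2) (simp_all add: ring_iso_def)
  have "range (\<lambda>d. ?K +> \<iota> d) \<subseteq> carrier (R Quot ?K)"
    using \<iota> by (auto simp: FactRing_def A_RCOSETS_def')
  with iso have "aut_normalizable S (?\<phi> \<circ> (\<lambda>d. ?K +> \<iota> d))"
    by (intro \<phi>.aut_normalizable_image norm) (simp add: ring_iso_def)
  moreover have "?\<phi> \<circ> (\<lambda>d. ?K +> \<iota> d) = h \<circ> \<iota>"
    using \<iota> by (auto simp: fun_eq_iff image_subset_iff)
  ultimately show ?thesis
    by simp
qed

lemma (in ring_hom_ring) kernel_neq_carrier:
  assumes "\<one>\<^bsub>S\<^esub> \<noteq> \<zero>\<^bsub>S\<^esub>"
  shows "a_kernel R S h \<noteq> carrier R"
proof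
  assume "a_kernel R S h = carrier R"
  then have "h \<one> = \<zero>\<^bsub>S\<^esub>"
    using R.one_closed unfolding a_kernel_def' by blast
  then show False
    using assms by simp
qed

lemma (in ideal) quotient_one_neq_zero:
  assumes "I \<noteq> carrier R"
  shows "\<one>\<^bsub>R Quot I\<^esub> \<noteq> \<zero>\<^bsub>R Quot I\<^esub>"
proof
  assume "\<one>\<^bsub>R Quot I\<^esub> = \<zero>\<^bsub>R Quot I\<^esub>"
  then have "I +> \<one> = I"
    by (simp add: FactRing_def)
  moreover have "\<one> \<in> I +> \<one>"
    by (rule a_rcos_self) simp
  ultimately have "\<one> \<in> I"
    by simp
  then show False
    using one_imp_carrier assms by blast
qed

lemma ring_hom_ring_skew_truncate_quotient:
  assumes "\<forall>i<n. ring_aut (\<sigma> i)" and "\<forall>i<n. \<forall>j<n. \<sigma> i \<circ> \<sigma> j = \<sigma> j \<circ> \<sigma> i"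
    and "r \<le> n" and "ideal I (skew_poly_ring \<sigma> r)"
  shows "ring_hom_ring (skew_poly_ring \<sigma> n) (skew_poly_ring \<sigma> r Quot I)
           (\<lambda>p. I +>\<^bsub>skew_poly_ring \<sigma> r\<^esub> skew_truncate r p)"
proof -
  have "\<forall>i<r. ring_aut (\<sigma> i)"
    using assms(1,3) by simp
  then show ?thesis
    using ring_hom_trans[OF skew_truncate_ring_hom[OF _ assms(3)] ideal.rcos_ring_hom[OF assms(4)]]
    by (intro ring_hom_ringI2 ring_skew_poly_ring assms(1,2) ideal.quotient_is_ring[OF assms(4)])
      (simp_all add: comp_def)
qed

lemma skew_truncate_quotient_surj:
  assumes "r \<le> n"
  shows "(\<lambda>p. I +>\<^bsub>skew_poly_ring \<sigma> r\<^esub> skew_truncate r p) ` carrier (skew_poly_ring \<sigma> n)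
           = carrier (skew_poly_ring \<sigma> r Quot I)"
proof -
  have "(\<lambda>p. I +>\<^bsub>skew_poly_ring \<sigma> r\<^esub> skew_truncate r p) ` carrier (skew_poly_ring \<sigma> n)
      = (\<lambda>p. I +>\<^bsub>skew_poly_ring \<sigma> r\<^esub> p) ` skew_truncate r ` skew_carrier n"
    by (simp add: image_image)
  also have "\<dots> = carrier (skew_poly_ring \<sigma> r Quot I)"
    unfolding skew_truncate_surj[OF assms] by (auto simp: FactRing_def A_RCOSETS_def')
  finally show ?thesis .
qed

theorem proposition5p2:
  fixes \<sigma> :: "nat \<Rightarrow> 'a::division_ring \<Rightarrow> 'a" and n r :: nat
  assumes "\<forall>i<n. ring_aut (\<sigma> i)"
    and "\<forall>i<n. \<forall>j<n. \<sigma> i \<circ> \<sigma> j = \<sigma> j \<circ> \<sigma> i"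
    and "r \<le> n"
    and "\<not> tuple_aut_normalizable \<sigma> r"
  shows "\<not> tuple_aut_normalizable \<sigma> n"
proof
  assume normalizable: "tuple_aut_normalizable \<sigma> n"
  let ?Rn = "skew_poly_ring \<sigma> n" and ?Rr = "skew_poly_ring \<sigma> r"
  obtain I where I: "ideal I ?Rr" and proper: "I \<noteq> carrier ?Rr"
    and not_normalizable: "\<not> aut_normalizable (?Rr Quot I) (\<lambda>d. I +>\<^bsub>?Rr\<^esub> skew_const d)"
    using assms(4) unfolding tuple_aut_normalizable_def by blast
  let ?h = "\<lambda>p. I +>\<^bsub>?Rr\<^esub> skew_truncate r p"
  interpret h: ring_hom_ring ?Rn "?Rr Quot I" ?h
    by (rule ring_hom_ring_skew_truncate_quotient[OF assms(1-3) I])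
  let ?K = "a_kernel ?Rn (?Rr Quot I) ?h"
  have "aut_normalizable (?Rn Quot ?K) (\<lambda>d. ?K +>\<^bsub>?Rn\<^esub> skew_const d)"
    using normalizable h.kernel_is_ideal h.kernel_neq_carrier[OF ideal.quotient_one_neq_zero[OF I proper]]
    unfolding tuple_aut_normalizable_def by blast
  then have "aut_normalizable (?Rr Quot I) (?h \<circ> skew_const)"
    by (rule h.aut_normalizable_of_quotient_kernel[OF skew_truncate_quotient_surj[OF assms(3)], rotated])
      (auto simp: skew_const_in_carrier)
  moreover have "?h \<circ> skew_const = (\<lambda>d. I +>\<^bsub>?Rr\<^esub> skew_const d)"
    by (auto simp: skew_truncate_id skew_const_in_carrier)
  ultimately show False
    using not_normalizable by simp
qed

end
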